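(* Let $\mathcal{X}$, $\mu$, $\nu$, $\mathcal{P}$, $\mathcal{B}_+(\mathcal{X})$ and $\zeta$ be as in the context. Assume that for some $p>0$ we have $\mathbf{E}L_f^p<1$ and $\mathbf{E}|f(z_0)-z_0|^p<\infty$. Then $\mathbf{E}|\zeta(A)|^p<\infty$ for all $A\in\mathcal{B}_+(\mathcal{X})$.
   Context: Let $\mathcal{G}$ be the space of Lipschitz functions $f:\mathbb{R}\to\mathbb{R}$ with the norm $|f(0)|+L_f$, where $L_f=\sup_{x\neq y}|f(y)-f(x)|/|x-y|$, and its Borel $\sigma$-algebra. Let $\nu$ be a probability measure on $\mathcal{G}$, $f$ a random element with distribution $\nu$, and assume $\mathbf{E}L_f<\infty$, $\mathbf{E}\log L_f<0$ and $\mathbf{E}|f(z_0)-z_0|<\infty$ for a fixed $z_0\in\mathbb{R}$. Let $\mathcal{X}$ be a complete separable metric space with a $\sigma$-finite measure $\mu$, and $\mathcal{B}_+(\mathcal{X})$ the family of Borel sets $A$ with $\mu(A)\in(0,\infty)$. Let $\mathcal{P}$ be a Poisson process on $[0,\infty)\times\mathcal{X}\times\mathcal{G}$ with intensity $\mathrm{Leb}\otimes\mu\otimes\nu$. For $A\in\mathcal{B}_+(\mathcal{X})$, enumerate the points $(t_{k,A},x_{k,A},f_{k,A})$ of $\mathcal{P}$ with $x_{k,A}\in A$ so that $t_{1,A}<t_{2,A}<\cdots$, let $N_A(t)$ be the number of them with $t_{k,A}\le t$, and $\zeta_t(A)=f_{1,A}\circ\cdots\circ f_{N_A(t),A}(z_0)$.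 The a.s. limit $\zeta(A)=\lim_{t\to\infty}\zeta_t(A)$ exists and does not depend on $z_0$. *)

theory Defs
  imports "HOL-Probability.Probability"
begin

definition lip_const :: "(real \<Rightarrow> real) \<Rightarrow> real" where
  "lip_const f = (SUP xy \<in> {(x, y). x \<noteq> (y::real)}. \<bar>f (snd xy) - f (fst xy)\<bar> / \<bar>fst xy - snd xy\<bar>)"

definition G_space :: "(real \<Rightarrow> real) set" where
  "G_space = {f. \<exists>C. C-lipschitz_on UNIV f}"

definition G_dist :: "(real \<Rightarrow> real) \<Rightarrow> (real \<Rightarrow> real) \<Rightarrow> real" where
  "G_dist f g = \<bar>f 0 - g 0\<bar> + lip_const (\<lambda>x. f x - g x)"

definition G_open :: "(real \<Rightarrow> real) set \<Rightarrow> bool" where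
  "G_open U \<longleftrightarrow> U \<subseteq> G_space \<and>
     (\<forall>f\<in>U. \<exists>e>0. \<forall>g\<in>G_space. G_dist f g < e \<longrightarrow> g \<in> U)"

definition G_borel :: "(real \<Rightarrow> real) measure" where
  "G_borel = sigma G_space {U. G_open U}"

definition npoints :: "'a set \<Rightarrow> 'a set \<Rightarrow> enat" where
  "npoints P B = (if finite (P \<inter> B) then enat (card (P \<inter> B)) else \<infinity>)"

definition poisson_process :: "'w measure \<Rightarrow> 'a measure \<Rightarrow> ('w \<Rightarrow> 'a set) \<Rightarrow> bool" where
  "poisson_process M Lam Pts \<longleftrightarrow>
     prob_space M \<and>
     (\<forall>w\<in>space M. Pts w \<subseteq> space Lam) \<and>
     (\<forall>B\<in>sets Lam. (\<lambda>w. npoints (Pts w) B) \<in> measurable M (count_space UNIV)) \<and>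
     (\<forall>B\<in>sets Lam. emeasure Lam B < \<infinity> \<longrightarrow>
        (\<forall>k::nat. measure M {w\<in>space M. npoints (Pts w) B = enat k} =
           exp (- enn2real (emeasure Lam B)) * enn2real (emeasure Lam B) ^ k / fact k)) \<and>
     (\<forall>B\<in>sets Lam. emeasure Lam B = \<infinity> \<longrightarrow>
        (AE w in M. npoints (Pts w) B = \<infinity>)) \<and>
     (\<forall>I (Bs :: nat \<Rightarrow> 'a set). finite I \<longrightarrow> Bs ` I \<subseteq> sets Lam \<longrightarrow> disjoint_family_on Bs I \<longrightarrow>
        prob_space.indep_vars M (\<lambda>_. count_space UNIV) (\<lambda>i w. npoints (Pts w) (Bs i)) I)"

definition points_upto :: "(real \<times> 'x \<times> (real \<Rightarrow> real)) set \<Rightarrow> 'x set \<Rightarrow> real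
     \<Rightarrow> (real \<times> 'x \<times> (real \<Rightarrow> real)) list" where
  "points_upto P A s = sorted_key_list_of_set fst {q \<in> P. fst q \<le> s \<and> fst (snd q) \<in> A}"

definition zeta_t :: "(real \<times> 'x \<times> (real \<Rightarrow> real)) set \<Rightarrow> 'x set \<Rightarrow> real \<Rightarrow> real \<Rightarrow> real" where
  "zeta_t P A z0 s = foldr (\<lambda>q g. snd (snd q) \<circ> g) (points_upto P A s) id z0"

definition zeta :: "(real \<times> 'x \<times> (real \<Rightarrow> real)) set \<Rightarrow> 'x set \<Rightarrow> real \<Rightarrow> real" where
  "zeta P A z0 = Lim at_top (\<lambda>s. zeta_t P A z0 s)"

end

theory Submission
  imports Defs
begin

(* Order the points of the Poisson process with mark in A by time and cut time into unit
   blocks. Writing L and b for the Lipschitz constant of a point's map and its displacement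
   |f z0 - z0|, the deviation |zeta_t(A) - z0| is at most the sum over blocks m of
   (product of L over the points before block m) * (product of max 1 L + b over block m - 1).
   The p-th power of the m-th term is dominated by a product over the points of the process
   of a deterministic weight, and such a product has expectation exp (integral of (weight - 1)),
   which here is at most C rho^m with rho = exp (- mu(A) (1 - E L^p)) < 1. Weighting block m by
   kappa^-m for some rho < kappa < 1 then controls the p-th power of the whole sum for every
   p > 0. *)

definition diff_quot :: "(real \<Rightarrow> real) \<Rightarrow> real \<times> real \<Rightarrow> real" where
  "diff_quot f xy = \<bar>f (snd xy) - f (fst xy)\<bar> / \<bar>fst xy - snd xy\<bar>"

definition off_diag :: "(real \<times> real) set" where
  "off_diag = {(x, y). x \<noteq> y}"

lemma lip_const_eq_SUP_diff_quot: "lip_const f = (SUP xy \<in> off_diag. diff_quot f xy)"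
  unfolding lip_const_def diff_quot_def off_diag_def ..

lemma off_diag_not_empty: "off_diag \<noteq> {}"
  unfolding off_diag_def by (auto intro: exI[of _ "(0, 1)"])

lemma bdd_above_diff_quot:
  assumes "f \<in> G_space"
  shows "bdd_above (diff_quot f ` off_diag)"
proof -
  obtain C where C: "C-lipschitz_on UNIV f" using assms unfolding G_space_def by auto
  have "diff_quot f (x, y) \<le> C" if "x \<noteq> y" for x y
  proof -
    have "\<bar>f y - f x\<bar> \<le> C * \<bar>y - x\<bar>"
      using lipschitz_onD[OF C, of y x] by (simp add: dist_real_def)
    with that show ?thesis
      unfolding diff_quot_def by (simp add: divide_le_eq abs_minus_commute)
  qed
  then show ?thesis unfolding off_diag_def by (intro bdd_aboveI2) auto
qed

lemma diff_quot_le_lip_const: "f \<in> G_space \<Longrightarrow> xy \<in> off_diag \<Longrightarrow> diff_quot f xy \<le> lip_const f"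
  unfolding lip_const_eq_SUP_diff_quot by (rule cSUP_upper[OF _ bdd_above_diff_quot])

lemma lip_const_nonneg: "f \<in> G_space \<Longrightarrow> 0 \<le> lip_const f"
  using diff_quot_le_lip_const[of f "(0, 1)"] by (simp add: off_diag_def diff_quot_def)

lemma abs_diff_le_lip_const: "f \<in> G_space \<Longrightarrow> \<bar>f y - f x\<bar> \<le> lip_const f * \<bar>y - x\<bar>"
proof (cases "x = y")
  case False
  assume "f \<in> G_space"
  with False have "\<bar>f y - f x\<bar> / \<bar>x - y\<bar> \<le> lip_const f"
    using diff_quot_le_lip_const[of f "(x, y)"] by (simp add: off_diag_def diff_quot_def)
  with False show ?thesis by (simp add: divide_le_eq abs_minus_commute mult.commute)
qed simp

lemma G_space_diff: "f \<in> G_space \<Longrightarrow> g \<in> G_space \<Longrightarrow> (\<lambda>x. f x - g x) \<in> G_space"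
  unfolding G_space_def using lipschitz_on_diff by blast

lemma space_G_borel: "space G_borel = G_space"
  unfolding G_borel_def by (rule space_measure_of) (auto simp: G_open_def)

lemma G_open_in_sets_G_borel: "G_open U \<Longrightarrow> U \<in> sets G_borel"
  unfolding G_borel_def by (subst sets_measure_of) (auto simp: G_open_def)

lemma borel_measurable_lip_const: "lip_const \<in> borel_measurable G_borel"
proof (subst borel_measurable_iff_greater, intro allI)
  fix a :: real
  have "G_open {g \<in> G_space. a < lip_const g}"
    unfolding G_open_def
  proof (intro conjI ballI)
    fix f assume "f \<in> {g \<in> G_space. a < lip_const g}"
    then have f: "f \<in> G_space" and a: "a < lip_const f" by auto
    obtain xy where xy: "xy \<in> off_diag" "a < diff_quot f xy"
      using a less_cSUP_iff[OF off_diag_not_empty bdd_above_diff_quot[OF f]]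
      unfolding lip_const_eq_SUP_diff_quot by auto
    show "\<exists>e>0. \<forall>g\<in>G_space. G_dist f g < e \<longrightarrow> g \<in> {g \<in> G_space. a < lip_const g}"
    proof (intro exI[of _ "diff_quot f xy - a"] conjI ballI impI)
      fix g assume g: "g \<in> G_space" and fg: "G_dist f g < diff_quot f xy - a"
      have "diff_quot f xy \<le> diff_quot g xy + diff_quot (\<lambda>x. f x - g x) xy"
        unfolding diff_quot_def by (simp add: add_divide_distrib[symmetric] divide_right_mono)
      also have "\<dots> \<le> lip_const g + G_dist f g"
        using diff_quot_le_lip_const[OF g xy(1)]
          diff_quot_le_lip_const[OF G_space_diff[OF f g] xy(1)]
        unfolding G_dist_def by simp
      finally show "g \<in> {g \<in> G_space. a < lip_const g}" using g fg by simp
    qed (use xy in simp)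
  qed auto
  then show "{g \<in> space G_borel. a < lip_const g} \<in> sets G_borel"
    unfolding space_G_borel by (rule G_open_in_sets_G_borel)
qed

text \<open>Evaluation at z is Lipschitz for the norm of G, with constant max 1 \<bar>z\<bar>.\<close>

lemma borel_measurable_eval: "(\<lambda>f. f z) \<in> borel_measurable G_borel"
proof (rule borel_measurableI)
  fix S :: "real set" assume S: "open S"
  define c where "c = max 1 \<bar>z\<bar>"
  have c: "1 \<le> c" "\<bar>z\<bar> \<le> c" unfolding c_def by auto
  have eval_close: "\<bar>f z - g z\<bar> \<le> c * G_dist f g" if f: "f \<in> G_space" and g: "g \<in> G_space" for f g
  proof -
    have fg: "(\<lambda>x. f x - g x) \<in> G_space" by (rule G_space_diff[OF f g])
    have "\<bar>f z - g z\<bar> \<le> \<bar>f 0 - g 0\<bar> + lip_const (\<lambda>x. f x - g x) * \<bar>z\<bar>"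
      using abs_diff_le_lip_const[OF fg, of z 0] by simp
    also have "\<dots> \<le> c * \<bar>f 0 - g 0\<bar> + c * lip_const (\<lambda>x. f x - g x)"
      using mult_right_mono[OF c(1), of "\<bar>f 0 - g 0\<bar>"]
        mult_right_mono[OF c(2) lip_const_nonneg[OF fg]]
      by (simp add: mult.commute)
    finally show ?thesis unfolding G_dist_def by (simp add: distrib_left)
  qed
  have "G_open ((\<lambda>f. f z) -` S \<inter> G_space)"
    unfolding G_open_def
  proof (intro conjI ballI)
    fix f assume "f \<in> (\<lambda>f. f z) -` S \<inter> G_space"
    then have f: "f \<in> G_space" and fz: "f z \<in> S" by auto
    obtain r where r: "r > 0" "ball (f z) r \<subseteq> S" using S fz open_contains_ball by blast
    show "\<exists>e>0. \<forall>g\<in>G_space. G_dist f g < e \<longrightarrow> g \<in> (\<lambda>f. f z) -` S \<inter> G_space"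
    proof (intro exI[of _ "r / c"] conjI ballI impI)
      fix g assume g: "g \<in> G_space" and "G_dist f g < r / c"
      then have "\<bar>f z - g z\<bar> < r"
        using eval_close[OF f g] c by (simp add: field_simps)
      with r g show "g \<in> (\<lambda>f. f z) -` S \<inter> G_space" by (auto simp: dist_real_def)
    qed (use r c in simp)
  qed auto
  then show "(\<lambda>f. f z) -` S \<inter> space G_borel \<in> sets G_borel"
    unfolding space_G_borel by (rule G_open_in_sets_G_borel)
qed

section \<open>Products over the points of a Poisson process\<close>

lemma poisson_pgf_sums:
  fixes l v :: real
  shows "(\<lambda>k. v ^ k * (exp (- l) * l ^ k / fact k)) sums exp (l * (v - 1))"
proof -
  have "(\<lambda>k. exp (- l) * (inverse (fact k) * (v * l) ^ k)) sums (exp (- l) * exp (v * l))"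
    using sums_mult[OF exp_converges[of "v * l"], of "exp (- l)"] by (simp add: divide_inverse)
  moreover have "exp (- l) * exp (v * l) = exp (l * (v - 1))"
    by (simp add: mult_exp_exp ring_distribs)
  ultimately show ?thesis
    by (simp add: power_mult_distrib divide_inverse mult_ac)
qed

text \<open>The convention v ^ \<infinity> = 0 matches point_prod below, which vanishes on infinite configurations.\<close>

definition enat_power :: "real \<Rightarrow> enat \<Rightarrow> real" where
  "enat_power v n = (case n of enat k \<Rightarrow> v ^ k | \<infinity> \<Rightarrow> 0)"

lemma enat_power_nonneg: "0 \<le> v \<Longrightarrow> 0 \<le> enat_power v n"
  by (simp add: enat_power_def split: enat.split)

locale poisson_proc =
  fixes M :: "'w measure" and Lam :: "'a measure" and Pts :: "'w \<Rightarrow> 'a set"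
  assumes poisson: "poisson_process M Lam Pts"
begin

sublocale prob_space M
  using poisson unfolding poisson_process_def by auto

definition cnt :: "'a set \<Rightarrow> 'w \<Rightarrow> enat" where
  "cnt B w = npoints (Pts w) B"

definition point_prod :: "('a \<Rightarrow> real) \<Rightarrow> 'a set \<Rightarrow> 'w \<Rightarrow> real" where
  "point_prod h B w = (if finite (Pts w \<inter> B) then (\<Prod>q\<in>Pts w \<inter> B. h q) else 0)"

lemma Pts_subset_space: "w \<in> space M \<Longrightarrow> Pts w \<subseteq> space Lam"
  using poisson unfolding poisson_process_def by auto

lemma measurable_cnt: "B \<in> sets Lam \<Longrightarrow> cnt B \<in> measurable M (count_space UNIV)"
  using poisson unfolding poisson_process_def cnt_def by auto

lemma prob_cnt_eq:
  "B \<in> sets Lam \<Longrightarrow> emeasure Lam B < \<infinity> \<Longrightarrow>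
    prob {w \<in> space M. cnt B w = enat k} = exp (- measure Lam B) * measure Lam B ^ k / fact k"
  using poisson unfolding poisson_process_def cnt_def measure_def by auto

lemma indep_vars_cnt:
  fixes C :: "nat \<Rightarrow> 'a set"
  assumes "finite I" "C ` I \<subseteq> sets Lam" "disjoint_family_on C I"
  shows "indep_vars (\<lambda>_. count_space UNIV) (\<lambda>i. cnt (C i)) I"
  using poisson assms unfolding poisson_process_def cnt_def by blast

lemma cnt_pred_sets: "B \<in> sets Lam \<Longrightarrow> {w \<in> space M. P (cnt B w)} \<in> sets M"
  using measurable_sets[OF measurable_cnt, of B "{x. P x}"] by (simp add: vimage_def Int_def conj_commute)

lemma cnt_finite_iff: "cnt B w \<noteq> \<infinity> \<longleftrightarrow> finite (Pts w \<inter> B)"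
  by (simp add: cnt_def npoints_def)

lemma nn_integral_enat_power_cnt:
  assumes B: "B \<in> sets Lam" "emeasure Lam B < \<infinity>" and v: "0 \<le> v"
  shows "(\<integral>\<^sup>+w. enat_power v (cnt B w) \<partial>M) = exp (measure Lam B * (v - 1))"
proof -
  define l where "l = measure Lam B"
  define E where "E k = {w \<in> space M. cnt B w = enat k}" for k
  have E: "E k \<in> sets M" for k unfolding E_def by (rule cnt_pred_sets[OF B(1)])
  have "enat_power v (cnt B w) = (\<Sum>k. ennreal (v ^ k) * indicator (E k) w)" if "w \<in> space M" for w
  proof (cases "cnt B w")
    case (enat k0)
    have "(\<Sum>k. ennreal (v ^ k) * indicator (E k) w) = (\<Sum>k\<in>{k0}. ennreal (v ^ k) * indicator (E k) w)"
      by (rule suminf_finite) (auto simp: enat that E_def)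
    then show ?thesis by (simp add: enat that enat_power_def E_def)
  qed (simp add: enat_power_def E_def)
  then have "(\<integral>\<^sup>+w. enat_power v (cnt B w) \<partial>M) = (\<integral>\<^sup>+w. (\<Sum>k. ennreal (v ^ k) * indicator (E k) w) \<partial>M)"
    by (intro nn_integral_cong) simp
  also have "\<dots> = (\<Sum>k. ennreal (v ^ k) * emeasure M (E k))"
    using E by (simp add: nn_integral_suminf nn_integral_cmult_indicator)
  also have "\<dots> = (\<Sum>k. ennreal (v ^ k * (exp (- l) * l ^ k / fact k)))"
    unfolding emeasure_eq_measure E_def prob_cnt_eq[OF B] l_def
    using v by (intro suminf_cong ennreal_mult'[symmetric]) simp
  also have "\<dots> = exp (l * (v - 1))"
    using poisson_pgf_sums[of v l] v measure_nonneg[of Lam B]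
    by (subst suminf_ennreal2) (auto simp: l_def sums_iff)
  finally show ?thesis unfolding l_def .
qed

lemma AE_cnt_finite:
  assumes B: "B \<in> sets Lam" "emeasure Lam B < \<infinity>"
  shows "AE w in M. finite (Pts w \<inter> B)"
proof -
  define S where "S = {w \<in> space M. cnt B w \<noteq> \<infinity>}"
  have S: "S \<in> sets M" unfolding S_def by (rule cnt_pred_sets[OF B(1)])
  have "emeasure M S = (\<integral>\<^sup>+w. indicator S w \<partial>M)"
    using S by simp
  also have "\<dots> = (\<integral>\<^sup>+w. enat_power 1 (cnt B w) \<partial>M)"
    by (intro nn_integral_cong) (auto simp: enat_power_def S_def split: enat.splits)
  also have "\<dots> = 1" using nn_integral_enat_power_cnt[OF B, of 1] by simp
  finally have "prob S = 1" by (simp add: emeasure_eq_measure)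
  from AE_prob_1[OF this] show ?thesis
    unfolding S_def by eventually_elim (auto simp flip: cnt_finite_iff)
qed

text \<open>Splitting B into level sets of h turns point_prod into a product of independent Poisson
  generating functions.\<close>

lemma point_prod_partition:
  assumes I: "finite I" and C: "disjoint_family_on C I" "(\<Union>i\<in>I. C i) = B"
    and h: "\<And>i x. i \<in> I \<Longrightarrow> x \<in> C i \<Longrightarrow> h x = v i"
  shows "point_prod h B w = (\<Prod>i\<in>I. enat_power (v i) (cnt (C i) w))"
proof -
  have PB: "Pts w \<inter> B = (\<Union>i\<in>I. Pts w \<inter> C i)" using C(2) by auto
  show ?thesis
  proof (cases "finite (Pts w \<inter> B)")
    case True
    then have fin: "finite (Pts w \<inter> C i)" if "i \<in> I" for i
      by (rule finite_subset[rotated]) (use C(2) that in auto)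
    have "(\<Prod>q\<in>Pts w \<inter> B. h q) = (\<Prod>i\<in>I. \<Prod>q\<in>Pts w \<inter> C i. h q)"
      unfolding PB using I fin C(1)
      by (intro prod.UNION_disjoint) (auto simp: disjoint_family_on_def)
    also have "\<dots> = (\<Prod>i\<in>I. enat_power (v i) (cnt (C i) w))"
      using fin h by (intro prod.cong refl) (simp add: cnt_def npoints_def enat_power_def)
    finally show ?thesis using True by (simp add: point_prod_def)
  next
    case False
    then have "infinite (\<Union>i\<in>I. Pts w \<inter> C i)" unfolding PB .
    then obtain i where "i \<in> I" "infinite (Pts w \<inter> C i)" using finite_UN[OF I] by blast
    then have "(\<Prod>i\<in>I. enat_power (v i) (cnt (C i) w)) = 0"
      using I by (intro prod_zero) (auto simp: cnt_def npoints_def enat_power_def)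
    then show ?thesis using False by (simp add: point_prod_def)
  qed
qed

lemma nn_integral_prod_enat_power_cnt:
  fixes C :: "nat \<Rightarrow> 'a set"
  assumes I: "finite I" and C: "C ` I \<subseteq> sets Lam" "disjoint_family_on C I"
    and fin: "\<And>i. i \<in> I \<Longrightarrow> emeasure Lam (C i) < \<infinity>" and v: "\<And>i. i \<in> I \<Longrightarrow> 0 \<le> v i"
  shows "(\<integral>\<^sup>+w. (\<Prod>i\<in>I. enat_power (v i) (cnt (C i) w)) \<partial>M)
    = exp (\<Sum>i\<in>I. measure Lam (C i) * (v i - 1))"
proof -
  have indep: "indep_vars (\<lambda>_. borel) (\<lambda>i w. ennreal (enat_power (v i) (cnt (C i) w))) I"
    by (rule indep_vars_compose2[OF indep_vars_cnt[OF I C]]) simp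
  have "(\<integral>\<^sup>+w. (\<Prod>i\<in>I. enat_power (v i) (cnt (C i) w)) \<partial>M)
      = (\<integral>\<^sup>+w. (\<Prod>i\<in>I. ennreal (enat_power (v i) (cnt (C i) w))) \<partial>M)"
    using v by (intro nn_integral_cong prod_ennreal[symmetric]) (simp add: enat_power_nonneg)
  also have "\<dots> = (\<Prod>i\<in>I. \<integral>\<^sup>+w. enat_power (v i) (cnt (C i) w) \<partial>M)"
    by (rule indep_vars_nn_integral[OF I indep]) simp
  also have "\<dots> = (\<Prod>i\<in>I. ennreal (exp (measure Lam (C i) * (v i - 1))))"
    using C(1) fin v by (intro prod.cong refl nn_integral_enat_power_cnt) auto
  also have "\<dots> = exp (\<Sum>i\<in>I. measure Lam (C i) * (v i - 1))"
    by (simp add: prod_ennreal exp_sum[OF I])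
  finally show ?thesis .
qed

end

lemma finite_level_sets_partition:
  fixes h :: "'a \<Rightarrow> 'b"
  assumes "finite (h ` B)"
  obtains I :: "nat set" and C v where "finite I" "disjoint_family_on C I" "(\<Union>i\<in>I. C i) = B"
    "\<And>i. i \<in> I \<Longrightarrow> C i = B \<inter> h -` {v i}" "\<And>i. i \<in> I \<Longrightarrow> v i \<in> h ` B"
proof -
  obtain v where v: "bij_betw v {0..<card (h ` B)} (h ` B)"
    using ex_bij_betw_nat_finite[OF assms] by blast
  define C where "C i = B \<inter> h -` {v i}" for i
  have "disjoint_family_on C {0..<card (h ` B)}"
    using v unfolding disjoint_family_on_def C_def bij_betw_def inj_on_def by auto
  moreover have "h x \<in> v ` {0..<card (h ` B)}" if "x \<in> B" for x
    using v that unfolding bij_betw_def by auto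
  then have "(\<Union>i\<in>{0..<card (h ` B)}. C i) = B"
    unfolding C_def by fastforce
  ultimately show ?thesis
    using that[of "{0..<card (h ` B)}" C v] C_def bij_betwE[OF v] by blast
qed

lemma nn_integral_level_sets:
  assumes I: "finite I" and C: "disjoint_family_on C I" "(\<Union>i\<in>I. C i) = B"
    and C_sets: "\<And>i. i \<in> I \<Longrightarrow> C i \<in> sets N" and C_fin: "\<And>i. i \<in> I \<Longrightarrow> emeasure N (C i) \<noteq> \<infinity>"
    and h: "\<And>i x. i \<in> I \<Longrightarrow> x \<in> C i \<Longrightarrow> h x = v i" and v: "\<And>i. i \<in> I \<Longrightarrow> 0 \<le> v i"
  shows "(\<integral>\<^sup>+x. ennreal (h x) * indicator B x \<partial>N) = (\<Sum>i\<in>I. v i * measure N (C i))"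
proof -
  have "ennreal (h x) * indicator B x = (\<Sum>i\<in>I. ennreal (v i) * indicator (C i) x)" for x
  proof (cases "x \<in> B")
    case True
    then obtain j where j: "j \<in> I" "x \<in> C j" using C(2) by auto
    then show ?thesis
      using sum_indicator_disjoint_family[OF C(1) j(2) I j(1), of "\<lambda>i. ennreal (v i)"] True h by simp
  qed (use C(2) in auto)
  then have "(\<integral>\<^sup>+x. ennreal (h x) * indicator B x \<partial>N) = (\<Sum>i\<in>I. v i * emeasure N (C i))"
    using C_sets by (simp add: nn_integral_sum nn_integral_cmult_indicator)
  also have "\<dots> = (\<Sum>i\<in>I. ennreal (v i * measure N (C i)))"
    using C_fin v by (intro sum.cong refl) (simp add: emeasure_eq_ennreal_measure ennreal_mult')
  finally show ?thesis using v by simp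
qed

context poisson_proc
begin

lemma nn_integral_point_prod_simple:
  assumes B: "B \<in> sets Lam" "emeasure Lam B < \<infinity>"
    and h: "h \<in> borel_measurable Lam" "\<And>x. 0 \<le> h x" "finite (h ` B)"
    and H: "0 \<le> H" "(\<integral>\<^sup>+x. ennreal (h x) * indicator B x \<partial>Lam) \<le> ennreal H"
  shows "point_prod h B \<in> borel_measurable M \<and>
    (\<integral>\<^sup>+w. point_prod h B w \<partial>M) \<le> exp (H - measure Lam B)"
proof -
  obtain I :: "nat set" and C v where I: "finite I" and C: "disjoint_family_on C I" "(\<Union>i\<in>I. C i) = B"
    and C_eq: "\<And>i. i \<in> I \<Longrightarrow> C i = B \<inter> h -` {v i}" and v_img: "\<And>i. i \<in> I \<Longrightarrow> v i \<in> h ` B"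
    using finite_level_sets_partition[OF h(3)] by blast
  have C_sets: "C i \<in> sets Lam" if "i \<in> I" for i
  proof -
    have "C i = B \<inter> (h -` {v i} \<inter> space Lam)" using C_eq[OF that] sets.sets_into_space[OF B(1)] by auto
    then show ?thesis using B(1) h(1) by (simp add: sets.Int measurable_sets)
  qed
  have C_fin: "emeasure Lam (C i) \<noteq> \<infinity>" if "i \<in> I" for i
    using emeasure_mono[of "C i" B Lam] B C_eq[OF that] by (auto simp: top_unique)
  have h_eq: "h x = v i" if "i \<in> I" "x \<in> C i" for i x using C_eq that by auto
  have v: "0 \<le> v i" if "i \<in> I" for i
    using v_img[OF that] h(2) by auto
  have rep: "point_prod h B w = (\<Prod>i\<in>I. enat_power (v i) (cnt (C i) w))" for w
    by (rule point_prod_partition[OF I C h_eq])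
  have "point_prod h B \<in> borel_measurable M"
    unfolding rep[abs_def] using C_sets by (intro borel_measurable_prod measurable_compose[OF measurable_cnt]) auto
  moreover have "(\<integral>\<^sup>+x. ennreal (h x) * indicator B x \<partial>Lam) = (\<Sum>i\<in>I. v i * measure Lam (C i))"
    by (rule nn_integral_level_sets[OF I C C_sets C_fin h_eq v])
  then have "(\<Sum>i\<in>I. v i * measure Lam (C i)) \<le> H"
    using H v by (simp add: sum_nonneg)
  moreover have "measure Lam B = (\<Sum>i\<in>I. measure Lam (C i))"
    using measure_finite_Union[OF I _ C(1)] C_sets C_fin C(2) by auto
  moreover have "(\<integral>\<^sup>+w. point_prod h B w \<partial>M) = exp (\<Sum>i\<in>I. measure Lam (C i) * (v i - 1))"
    unfolding rep using C_sets C_fin v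
    by (intro nn_integral_prod_enat_power_cnt[OF I _ C(1)]) (auto simp: less_top)
  ultimately show ?thesis
    by (simp add: algebra_simps sum_subtractf)
qed

end

lemma real_simple_function_approx:
  assumes h: "h \<in> borel_measurable N" "\<And>x. 0 \<le> h x"
  obtains g :: "nat \<Rightarrow> 'a \<Rightarrow> real" where "\<And>i. g i \<in> borel_measurable N" "\<And>i. finite (g i ` space N)"
    "\<And>i x. 0 \<le> g i x" "\<And>i x. g i x \<le> h x" "\<And>x. (\<lambda>i. g i x) \<longlonglongrightarrow> h x"
proof -
  have "(\<lambda>x. ennreal (h x)) \<in> borel_measurable N" using h(1) by measurable
  then obtain f where f: "\<And>i. simple_function N (f i)" "incseq f"
    "\<And>i x. f i x < top" "\<And>x. (SUP i. f i x) = ennreal (h x)"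
    using borel_measurable_implies_simple_function_sequence' by metis
  define g where "g i x = enn2real (f i x)" for i x
  have f_eq: "f i x = ennreal (g i x)" for i x using f(3)[of i x] by (simp add: g_def less_top)
  show ?thesis
  proof (rule that)
    show "g i \<in> borel_measurable N" for i
      unfolding g_def using borel_measurable_simple_function[OF f(1)] by measurable
    show "finite (g i ` space N)" for i
      using finite_imageI[OF simple_functionD(1)[OF f(1)], of enn2real i] unfolding g_def image_image .
    show "g i x \<le> h x" for i x
      using f(4)[of x] SUP_upper[of i UNIV "\<lambda>i. f i x"] h(2)[of x] unfolding f_eq
      by (metis UNIV_I ennreal_le_iff)
    have "incseq (\<lambda>i. f i x)" for x using f(2) by (simp add: incseq_def le_fun_def)
    then have "(\<lambda>i. f i x) \<longlonglongrightarrow> ennreal (h x)" for x using LIMSEQ_SUP f(4) by metis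
    then show "(\<lambda>i. g i x) \<longlonglongrightarrow> h x" for x unfolding g_def by (rule tendsto_enn2real) (rule h(2))
  qed (simp add: g_def)
qed

context poisson_proc
begin

text \<open>The general case follows by monotone approximation with simple functions and Fatou's lemma.\<close>

lemma nn_integral_point_prod_le:
  assumes B: "B \<in> sets Lam" "emeasure Lam B < \<infinity>"
    and h: "h \<in> borel_measurable Lam" "\<And>x. 0 \<le> h x"
    and H: "0 \<le> H" "(\<integral>\<^sup>+x. ennreal (h x) * indicator B x \<partial>Lam) \<le> ennreal H"
  shows "point_prod h B \<in> borel_measurable M \<and>
    (\<integral>\<^sup>+w. point_prod h B w \<partial>M) \<le> exp (H - measure Lam B)"
proof -
  obtain g where g: "\<And>i. g i \<in> borel_measurable Lam" "\<And>i. finite (g i ` space Lam)"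
    "\<And>i x. 0 \<le> g i x" "\<And>i x. g i x \<le> h x" "\<And>x. (\<lambda>i. g i x) \<longlonglongrightarrow> h x"
    using real_simple_function_approx[OF h] by blast
  have approx: "point_prod (g i) B \<in> borel_measurable M \<and>
      (\<integral>\<^sup>+w. point_prod (g i) B w \<partial>M) \<le> exp (H - measure Lam B)" for i
  proof (rule nn_integral_point_prod_simple[OF B g(1,3) _ H(1)])
    show "finite (g i ` B)"
      using sets.sets_into_space[OF B(1)] by (intro finite_subset[OF _ g(2)]) auto
    have "(\<integral>\<^sup>+x. ennreal (g i x) * indicator B x \<partial>Lam) \<le> (\<integral>\<^sup>+x. ennreal (h x) * indicator B x \<partial>Lam)"
      using g(4) by (intro nn_integral_mono mult_right_mono ennreal_leI) auto
    then show "(\<integral>\<^sup>+x. ennreal (g i x) * indicator B x \<partial>Lam) \<le> ennreal H" using H(2) by simp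
  qed
  have lim: "(\<lambda>i. point_prod (g i) B w) \<longlonglongrightarrow> point_prod h B w" for w
    by (cases "finite (Pts w \<inter> B)") (simp_all add: point_prod_def tendsto_prod g(5))
  have "point_prod h B \<in> borel_measurable M"
    by (rule borel_measurable_LIMSEQ_real[OF lim]) (use approx in blast)
  moreover have "(\<integral>\<^sup>+w. point_prod h B w \<partial>M) = (\<integral>\<^sup>+w. liminf (\<lambda>i. ennreal (point_prod (g i) B w)) \<partial>M)"
    by (intro nn_integral_cong lim_imp_Liminf[symmetric] tendsto_ennrealI lim) simp
  moreover have "\<dots> \<le> liminf (\<lambda>i. \<integral>\<^sup>+w. point_prod (g i) B w \<partial>M)"
    by (rule nn_integral_liminf) (rule measurable_compose[OF approx[THEN conjunct1]], simp)
  moreover have "\<dots> \<le> exp (H - measure Lam B)"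
    using approx by (intro order_trans[OF Liminf_le_Limsup Limsup_bounded] always_eventually) auto
  ultimately show ?thesis by simp
qed

end

lemma (in prob_space) AE_not_in_if_prob_le_inverse:
  fixes E :: "nat \<Rightarrow> 'a set"
  assumes E: "\<And>n. E n \<in> events" and sub: "\<And>n. 1 \<le> n \<Longrightarrow> S \<subseteq> E n"
    and prob: "\<And>n. 1 \<le> n \<Longrightarrow> prob (E n) \<le> c / n"
  shows "AE w in M. w \<notin> S"
proof (rule AE_I')
  define Z where "Z = (\<Inter>n\<in>{1::nat..}. E n)"
  have Z: "Z \<in> events"
    unfolding Z_def by (intro sets.countable_INT') (auto simp: E)
  have "prob Z \<le> e" if "0 < e" for e
  proof -
    obtain n :: nat where "max 1 (c / e) < n" using reals_Archimedean2 by blast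
    then have n: "c / e < n" "1 \<le> n" by auto
    have "prob Z \<le> prob (E n)" unfolding Z_def using n E by (intro finite_measure_mono) auto
    also have "\<dots> \<le> c / n" by (rule prob[OF n(2)])
    also have "\<dots> \<le> e" using n that by (simp add: field_simps)
    finally show ?thesis .
  qed
  then have "prob Z \<le> 0" using field_le_epsilon[of "prob Z" 0] by simp
  then have "prob Z = 0" using measure_nonneg[of M Z] by linarith
  then show "Z \<in> null_sets M" using Z by (simp add: null_sets_def emeasure_eq_measure)
  show "{w \<in> space M. \<not> w \<notin> S} \<subseteq> Z" unfolding Z_def using sub by auto
qed

abbreviation intensity :: "'x measure \<Rightarrow> (real \<Rightarrow> real) measure \<Rightarrow> (real \<times> 'x \<times> (real \<Rightarrow> real)) measure" where
  "intensity \<mu> \<nu> \<equiv> restrict_space lborel {0..} \<Otimes>\<^sub>M (\<mu> \<Otimes>\<^sub>M \<nu>)"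

locale poisson_iteration = poisson_proc M "intensity \<mu> \<nu>" Pts
  for M :: "'w measure" and \<mu> :: "'x measure" and \<nu> :: "(real \<Rightarrow> real) measure" and Pts +
  fixes A :: "'x set"
  assumes \<nu>_prob: "prob_space \<nu>" and \<nu>_space: "space \<nu> = G_space" and \<nu>_sets: "sets \<nu> = sets G_borel"
    and \<mu>_sigma_finite: "sigma_finite_measure \<mu>"
    and A_sets[measurable]: "A \<in> sets \<mu>" and A_finite: "emeasure \<mu> A < \<infinity>"
begin

abbreviation "Lam \<equiv> intensity \<mu> \<nu>"

definition window :: "real \<Rightarrow> real \<Rightarrow> (real \<times> 'x \<times> (real \<Rightarrow> real)) set" where
  "window a b = {q \<in> space Lam. a \<le> fst q \<and> fst q < b \<and> fst (snd q) \<in> A}"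

definition rate :: real where
  "rate = measure \<mu> A"

lemma borel_measurable_lip_const_\<nu>[measurable]: "lip_const \<in> borel_measurable \<nu>"
  using borel_measurable_lip_const measurable_cong_sets[OF \<nu>_sets refl] by blast

lemma borel_measurable_eval_\<nu>[measurable]: "(\<lambda>f. f z) \<in> borel_measurable \<nu>"
  using borel_measurable_eval measurable_cong_sets[OF \<nu>_sets refl] by blast

lemma borel_measurable_fst_Lam[measurable]: "fst \<in> borel_measurable Lam"
proof -
  have "(\<lambda>t. t) \<in> measurable (restrict_space lborel {0::real..}) borel"
    by (rule measurable_restrict_space1) simp
  then show ?thesis using measurable_compose[OF measurable_fst] by fastforce
qed

lemma window_sets[measurable]: "window a b \<in> sets Lam"
  unfolding window_def by measurable

lemma space_Lam: "space Lam = {0..} \<times> space \<mu> \<times> G_space"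
  by (simp add: space_pair_measure space_restrict_space \<nu>_space)

lemma Pts_mem: "w \<in> space M \<Longrightarrow> q \<in> Pts w \<Longrightarrow> 0 \<le> fst q \<and> snd (snd q) \<in> G_space"
  using Pts_subset_space[of w] space_Lam by (cases q) auto

lemma nn_integral_window:
  assumes \<phi>[measurable]: "\<phi> \<in> borel_measurable \<nu>" and ab: "0 \<le> a" "a \<le> b"
  shows "(\<integral>\<^sup>+q. \<phi> (snd (snd q)) * indicator (window a b) q \<partial>Lam)
    = ennreal (b - a) * emeasure \<mu> A * (\<integral>\<^sup>+f. \<phi> f \<partial>\<nu>)"
proof -
  interpret \<mu>\<nu>: sigma_finite_measure "\<mu> \<Otimes>\<^sub>M \<nu>"
    using \<mu>_sigma_finite \<nu>_prob by (simp add: sigma_finite_pair_measure prob_space_imp_sigma_finite)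
  interpret \<nu>: sigma_finite_measure \<nu> using \<nu>_prob by (simp add: prob_space_imp_sigma_finite)
  define K where "K = emeasure \<mu> A * (\<integral>\<^sup>+f. \<phi> f \<partial>\<nu>)"
  have m1: "(\<lambda>y. indicator A (fst y) * \<phi> (snd y)) \<in> borel_measurable (\<mu> \<Otimes>\<^sub>M \<nu>)"
    by measurable
  have m2: "(\<lambda>q. indicator {a..<b} (fst q) * (indicator A (fst (snd q)) * \<phi> (snd (snd q))))
      \<in> borel_measurable Lam"
    by measurable
  have "(\<integral>\<^sup>+y. indicator A (fst y) * \<phi> (snd y) \<partial>(\<mu> \<Otimes>\<^sub>M \<nu>)) = (\<integral>\<^sup>+x. \<integral>\<^sup>+f. indicator A x * \<phi> f \<partial>\<nu> \<partial>\<mu>)"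
    by (subst \<nu>.nn_integral_fst[symmetric, OF m1]) simp
  also have "\<dots> = K"
    unfolding K_def by (simp add: nn_integral_cmult nn_integral_multc)
  finally have inner: "(\<integral>\<^sup>+y. indicator A (fst y) * \<phi> (snd y) \<partial>(\<mu> \<Otimes>\<^sub>M \<nu>)) = K" .
  have "(\<integral>\<^sup>+q. \<phi> (snd (snd q)) * indicator (window a b) q \<partial>Lam)
      = (\<integral>\<^sup>+q. indicator {a..<b} (fst q) * (indicator A (fst (snd q)) * \<phi> (snd (snd q))) \<partial>Lam)"
    by (intro nn_integral_cong) (auto simp: window_def indicator_def)
  also have "\<dots> = (\<integral>\<^sup>+t. indicator {a..<b} t * K \<partial>restrict_space lborel {0..})"
    by (subst \<mu>\<nu>.nn_integral_fst[symmetric, OF m2]) (simp add: nn_integral_cmult inner)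
  also have "\<dots> = K * emeasure (restrict_space lborel {0..}) {a..<b}"
    using ab by (subst mult.commute, intro nn_integral_cmult_indicator) (auto simp: sets_restrict_space_iff)
  also have "emeasure (restrict_space lborel {0..}) {a..<b} = ennreal (b - a)"
    using ab by (subst emeasure_restrict_space) auto
  finally show ?thesis unfolding K_def by (simp add: ac_simps)
qed

lemma rate_nonneg: "0 \<le> rate"
  unfolding rate_def by (rule measure_nonneg)

lemma emeasure_A: "emeasure \<mu> A = rate"
  unfolding rate_def using A_finite by (intro emeasure_eq_ennreal_measure) simp

lemma emeasure_window: "0 \<le> a \<Longrightarrow> a \<le> b \<Longrightarrow> emeasure Lam (window a b) = (b - a) * rate"
  using nn_integral_window[of "\<lambda>_. 1" a b] prob_space.emeasure_space_1[OF \<nu>_prob] rate_nonneg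
  by (simp add: emeasure_A ennreal_mult)

lemma window_finite: "0 \<le> a \<Longrightarrow> a \<le> b \<Longrightarrow> emeasure Lam (window a b) < \<infinity>"
  by (simp add: emeasure_window)

lemma measure_window: "0 \<le> a \<Longrightarrow> a \<le> b \<Longrightarrow> measure Lam (window a b) = (b - a) * rate"
  using emeasure_window rate_nonneg by (simp add: measure_def)

lemma prob_window_ge_2:
  assumes "0 \<le> a" "a \<le> b"
  shows "prob {w \<in> space M. cnt (window a b) w \<notin> {0, 1}} \<le> ((b - a) * rate)\<^sup>2"
proof -
  define d where "d = (b - a) * rate"
  have d: "0 \<le> d" using assms rate_nonneg unfolding d_def by simp
  define S where "S k = {w \<in> space M. cnt (window a b) w = enat k}" for k
  have prob_S: "prob (S k) = exp (- d) * d ^ k / fact k" for k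
    unfolding S_def d_def using prob_cnt_eq[OF window_sets window_finite[OF assms]]
    by (simp add: measure_window[OF assms])
  define S2 where "S2 = {w \<in> space M. cnt (window a b) w \<notin> {0, 1}}"
  have sets: "S 0 \<in> events" "S 1 \<in> events" "S2 \<in> events"
    unfolding S_def S2_def by (rule cnt_pred_sets[OF window_sets])+
  have "space M = (S 0 \<union> S 1) \<union> S2"
    by (auto simp: S_def S2_def zero_enat_def one_enat_def)
  then have "1 = prob ((S 0 \<union> S 1) \<union> S2)" using prob_space by simp
  also have "\<dots> = prob (S 0 \<union> S 1) + prob S2"
    using sets by (intro finite_measure_Union) (auto simp: S_def S2_def zero_enat_def one_enat_def)
  also have "prob (S 0 \<union> S 1) = prob (S 0) + prob (S 1)"
    using sets by (intro finite_measure_Union) (auto simp: S_def)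
  finally have "1 = prob (S 0) + prob (S 1) + prob S2" .
  moreover have "(1 - d) * (1 + d) \<le> exp (- d) * (1 + d)"
    using exp_ge_add_one_self[of "- d"] d by (intro mult_right_mono) auto
  ultimately show ?thesis
    unfolding d_def[symmetric] S2_def[symmetric] by (simp add: prob_S algebra_simps power2_eq_square)
qed

lemma AE_finite_window: "AE w in M. \<forall>m::nat. finite (Pts w \<inter> window 0 m)"
  unfolding AE_all_countable by (intro allI AE_cnt_finite window_sets window_finite) auto

text \<open>Two distinct points with equal times in window 0 m lie in a common window of length 1/n,
  and this has probability at most m n (rate/n)^2.\<close>

lemma tie_in_short_window:
  assumes q: "q \<in> window 0 m" and n: "1 \<le> n"
  obtains j :: nat where "j < m * n" "q \<in> window (j / n) (Suc j / n)"
    "\<And>q'. q' \<in> window 0 m \<Longrightarrow> fst q' = fst q \<Longrightarrow> q' \<in> window (j / n) (Suc j / n)"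
proof -
  define j where "j = nat \<lfloor>fst q * n\<rfloor>"
  have t: "0 \<le> fst q" "fst q < m" using q by (auto simp: window_def)
  have "real j = \<lfloor>fst q * n\<rfloor>" unfolding j_def using t by simp
  then have "j / n \<le> fst q" "fst q < Suc j / n"
    using n by (simp_all add: divide_le_eq less_divide_eq) linarith+
  moreover have "j < m * n"
    using t n unfolding j_def by (simp add: nat_less_iff floor_less_iff)
  ultimately show ?thesis
    using that[of j] q by (auto simp: window_def)
qed

lemma crowded_window_if_not_inj_on:
  assumes "\<not> inj_on fst (Pts w \<inter> window 0 m)" and n: "1 \<le> n"
  obtains j :: nat where "j < m * n" "cnt (window (j / n) (Suc j / n)) w \<notin> {0, 1}"
proof -
  obtain q q' where qq: "q \<in> Pts w \<inter> window 0 m" "q' \<in> Pts w \<inter> window 0 m" "q \<noteq> q'" "fst q' = fst q"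
    using assms(1) unfolding inj_on_def by metis
  then obtain j where j: "j < m * n" "q \<in> window (j / n) (Suc j / n)" "q' \<in> window (j / n) (Suc j / n)"
    using tie_in_short_window[of q m n] n by blast
  have "cnt (window (j / n) (Suc j / n)) w \<notin> {0, 1}"
  proof (cases "finite (Pts w \<inter> window (j / n) (Suc j / n))")
    case True
    have "card {q, q'} \<le> card (Pts w \<inter> window (j / n) (Suc j / n))"
      using True j qq by (intro card_mono) auto
    then show ?thesis
      using True qq(3) by (auto simp: cnt_def npoints_def zero_enat_def one_enat_def)
  qed (simp add: cnt_def npoints_def)
  with j(1) show ?thesis by (rule that)
qed

lemma AE_inj_on_fst_window: "AE w in M. inj_on fst (Pts w \<inter> window 0 (real m))"
proof -
  define J where "J n j = window (j / n) (Suc j / n)" for n j :: nat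
  define E where "E n = (\<Union>j<m * n. {w \<in> space M. cnt (J n j) w \<notin> {0, 1}})" for n
  have "AE w in M. w \<notin> {w \<in> space M. \<not> inj_on fst (Pts w \<inter> window 0 m)}"
  proof (rule AE_not_in_if_prob_le_inverse)
    show "E n \<in> events" for n
      unfolding E_def J_def by (intro sets.finite_UN finite_lessThan cnt_pred_sets window_sets)
    show "prob (E n) \<le> m * rate\<^sup>2 / n" if n: "1 \<le> n" for n
    proof -
      have "prob (E n) \<le> (\<Sum>j<m * n. prob {w \<in> space M. cnt (J n j) w \<notin> {0, 1}})"
        unfolding E_def J_def by (rule measure_UNION_le, simp, rule cnt_pred_sets[OF window_sets])
      also have "\<dots> \<le> (\<Sum>j<m * n. (rate / n)\<^sup>2)"
      proof (rule sum_mono)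
        fix j
        have "Suc j / n - j / n = 1 / n" by (simp add: diff_divide_distrib[symmetric])
        then show "prob {w \<in> space M. cnt (J n j) w \<notin> {0, 1}} \<le> (rate / n)\<^sup>2"
          using prob_window_ge_2[of "j / n" "Suc j / n"] n
          by (simp add: J_def divide_right_mono)
      qed
      also have "\<dots> = m * rate\<^sup>2 / n" using n by (simp add: power2_eq_square field_simps)
      finally show ?thesis .
    qed
    show "{w \<in> space M. \<not> inj_on fst (Pts w \<inter> window 0 m)} \<subseteq> E n" if "1 \<le> n" for n
      using crowded_window_if_not_inj_on[OF _ that] unfolding E_def J_def by blast
  qed
  with AE_space show ?thesis by eventually_elim auto
qed

definition simple_config :: "'w \<Rightarrow> bool" where
  "simple_config w \<longleftrightarrow> (\<forall>m::nat. finite (Pts w \<inter> window 0 m) \<and> inj_on fst (Pts w \<inter> window 0 m))"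

lemma AE_simple_config: "AE w in M. simple_config w"
  using AE_finite_window AE_inj_on_fst_window unfolding simple_config_def
  by (simp add: AE_all_countable)

end

section \<open>Deterministic bounds for compositions of Lipschitz maps\<close>

fun chain_bound :: "('q \<Rightarrow> real) \<Rightarrow> ('q \<Rightarrow> real) \<Rightarrow> 'q list \<Rightarrow> real" where
  "chain_bound L b [] = 0"
| "chain_bound L b (q # qs) = b q + L q * chain_bound L b qs"

lemma abs_foldr_comp_sub_le_chain_bound:
  assumes "\<forall>q\<in>set xs. F q \<in> G_space"
  shows "\<bar>foldr (\<lambda>q g. F q \<circ> g) xs id z - z\<bar>
    \<le> chain_bound (\<lambda>q. lip_const (F q)) (\<lambda>q. \<bar>F q z - z\<bar>) xs"
  using assms
proof (induction xs)
  case (Cons q qs)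
  define x where "x = foldr (\<lambda>q g. F q \<circ> g) qs id z"
  have F: "F q \<in> G_space" using Cons.prems by simp
  have IH: "\<bar>x - z\<bar> \<le> chain_bound (\<lambda>q. lip_const (F q)) (\<lambda>q. \<bar>F q z - z\<bar>) qs"
    unfolding x_def by (rule Cons.IH) (use Cons.prems in simp)
  have "\<bar>F q x - z\<bar> \<le> \<bar>F q z - z\<bar> + lip_const (F q) * \<bar>x - z\<bar>"
    using abs_diff_le_lip_const[OF F, of x z] by linarith
  also have "\<dots> \<le> \<bar>F q z - z\<bar> + lip_const (F q) * chain_bound (\<lambda>q. lip_const (F q)) (\<lambda>q. \<bar>F q z - z\<bar>) qs"
    using IH lip_const_nonneg[OF F] by (simp add: mult_left_mono)
  finally have bound: "\<bar>F q x - z\<bar> \<le> \<dots>" .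
  have "foldr (\<lambda>q g. F q \<circ> g) (q # qs) id z = F q x" by (simp add: x_def)
  then show ?case unfolding chain_bound.simps using bound by (simp only:)
qed simp

text \<open>Block m consists of the points with time in [m, m + 1). In the bound for the iterated
  composition, the points of block m contribute the second factor of block_term, damped by the
  Lipschitz constants of all earlier points.\<close>

definition block_term :: "('q \<Rightarrow> real) \<Rightarrow> ('q \<Rightarrow> real) \<Rightarrow> ('q \<Rightarrow> real) \<Rightarrow> 'q set \<Rightarrow> nat \<Rightarrow> real" where
  "block_term t L b P m = (\<Prod>q\<in>{q \<in> P. nat \<lfloor>t q\<rfloor> < m}. L q)
     * ((\<Prod>q\<in>{q \<in> P. nat \<lfloor>t q\<rfloor> = m}. max 1 (L q) + b q) - 1)"

lemma block_term_nonneg: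
  assumes "\<forall>q\<in>P. 0 \<le> L q \<and> 0 \<le> b q"
  shows "0 \<le> block_term t L b P m"
proof -
  have "0 \<le> (\<Prod>q\<in>{q \<in> P. nat \<lfloor>t q\<rfloor> < m}. L q)"
    using assms by (intro prod_nonneg) auto
  moreover have "1 \<le> (\<Prod>q\<in>{q \<in> P. nat \<lfloor>t q\<rfloor> = m}. max 1 (L q) + b q)"
    using assms by (intro prod_ge_1) (auto simp: max_def)
  ultimately show ?thesis unfolding block_term_def by simp
qed

lemma mult_sub_one_add_le:
  fixes L b Z :: real
  assumes "0 \<le> L" "0 \<le> b" "1 \<le> Z"
  shows "L * (Z - 1) + b \<le> (max 1 L + b) * Z - 1"
proof (cases "L \<le> 1")
  case True
  have "0 \<le> (1 - L) * (Z - 1) + b * (Z - 1)" using True assms by simp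
  then show ?thesis unfolding max_absorb1[OF True] by (simp add: algebra_simps)
next
  case False
  have "0 \<le> b * (Z - 1)" using assms by simp
  then show ?thesis using False unfolding max_absorb2[of 1 L] by (simp add: algebra_simps)
qed

lemma block_term_first_block:
  assumes P: "finite P" "q \<in> P" and first: "\<forall>q'\<in>P. nat \<lfloor>t q\<rfloor> \<le> nat \<lfloor>t q'\<rfloor>"
    and nonneg: "\<forall>q'\<in>P. 0 \<le> L q' \<and> 0 \<le> b q'"
  shows "L q * block_term t L b (P - {q}) (nat \<lfloor>t q\<rfloor>) + b q \<le> block_term t L b P (nat \<lfloor>t q\<rfloor>)"
proof -
  define m where "m = nat \<lfloor>t q\<rfloor>"
  define Z where "Z = (\<Prod>q'\<in>{q' \<in> P - {q}. nat \<lfloor>t q'\<rfloor> = m}. max 1 (L q') + b q')"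
  have Z: "1 \<le> Z" unfolding Z_def using nonneg by (intro prod_ge_1) (auto simp: max_def)
  have before: "{q' \<in> P. nat \<lfloor>t q'\<rfloor> < m} = {}" "{q' \<in> P - {q}. nat \<lfloor>t q'\<rfloor> < m} = {}"
    using first m_def by fastforce+
  have "{q' \<in> P. nat \<lfloor>t q'\<rfloor> = m} = insert q {q' \<in> P - {q}. nat \<lfloor>t q'\<rfloor> = m}"
    using P by (auto simp: m_def)
  then have "(\<Prod>q'\<in>{q' \<in> P. nat \<lfloor>t q'\<rfloor> = m}. max 1 (L q') + b q') = (max 1 (L q) + b q) * Z"
    unfolding Z_def using P by simp
  then show ?thesis
    unfolding m_def[symmetric] block_term_def before Z_def[symmetric]
    using P mult_sub_one_add_le[of "L q" "b q" Z] Z nonneg by simp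
qed

lemma block_term_insert_first:
  assumes P: "finite P" "q \<in> P" and first: "\<forall>q'\<in>P. t q \<le> t q'"
    and nonneg: "\<forall>q'\<in>P. 0 \<le> L q' \<and> 0 \<le> b q'"
  shows "L q * block_term t L b (P - {q}) m + (if m = nat \<lfloor>t q\<rfloor> then b q else 0)
    \<le> block_term t L b P m"
proof -
  define m0 where "m0 = nat \<lfloor>t q\<rfloor>"
  have m0_le: "m0 \<le> nat \<lfloor>t q'\<rfloor>" if "q' \<in> P" for q'
    unfolding m0_def using first that by (intro nat_mono floor_mono) auto
  consider "m < m0" | "m = m0" | "m0 < m" by linarith
  then show ?thesis
  proof cases
    case 1
    then have "{q' \<in> P. nat \<lfloor>t q'\<rfloor> = m} = {}" "{q' \<in> P - {q}. nat \<lfloor>t q'\<rfloor> = m} = {}"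
      using m0_le by fastforce+
    with 1 show ?thesis unfolding block_term_def m0_def by (simp only:) simp
  next
    case 2
    with block_term_first_block[OF P _ nonneg] m0_le show ?thesis by (simp add: m0_def)
  next
    case 3
    then have "{q' \<in> P. nat \<lfloor>t q'\<rfloor> = m} = {q' \<in> P - {q}. nat \<lfloor>t q'\<rfloor> = m}"
      using P by (auto simp: m0_def)
    moreover have "{q' \<in> P. nat \<lfloor>t q'\<rfloor> < m} = insert q {q' \<in> P - {q}. nat \<lfloor>t q'\<rfloor> < m}"
      using 3 P by (auto simp: m0_def)
    then have "(\<Prod>q'\<in>{q' \<in> P. nat \<lfloor>t q'\<rfloor> < m}. L q') = L q * (\<Prod>q'\<in>{q' \<in> P - {q}. nat \<lfloor>t q'\<rfloor> < m}. L q')"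
      using P by simp
    ultimately show ?thesis
      using 3 unfolding block_term_def m0_def by (simp add: mult.assoc)
  qed
qed

lemma chain_bound_le_sum_block_term:
  assumes "finite P" "\<forall>q\<in>P. nat \<lfloor>t q\<rfloor> < K \<and> 0 \<le> L q \<and> 0 \<le> b q"
    and "set xs \<subseteq> P" "distinct xs" "sorted (map t xs)"
    and "\<forall>q\<in>P. \<forall>q'\<in>set xs. t q < t q' \<longrightarrow> q \<in> set xs"
  shows "chain_bound L b xs \<le> (\<Sum>m<K. block_term t L b P m)"
  using assms
proof (induction xs arbitrary: P)
  case Nil
  then show ?case by (simp add: sum_nonneg block_term_nonneg)
next
  case (Cons q qs)
  have first: "\<forall>q'\<in>P. t q \<le> t q'"
    using Cons.prems(3,5,6) by (auto simp: not_less[symmetric])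
  have IH: "chain_bound L b qs \<le> (\<Sum>m<K. block_term t L b (P - {q}) m)"
    using Cons.prems by (intro Cons.IH) auto
  have "chain_bound L b (q # qs) \<le> b q + L q * (\<Sum>m<K. block_term t L b (P - {q}) m)"
    using IH Cons.prems by (simp add: mult_left_mono)
  also have "\<dots> = (\<Sum>m<K. L q * block_term t L b (P - {q}) m + (if m = nat \<lfloor>t q\<rfloor> then b q else 0))"
    using Cons.prems by (simp add: sum.distrib sum_distrib_left)
  also have "\<dots> \<le> (\<Sum>m<K. block_term t L b P m)"
    using Cons.prems first by (intro sum_mono block_term_insert_first) auto
  finally show ?case .
qed

lemma nat_floor_less_iff: "0 \<le> x \<Longrightarrow> nat \<lfloor>x\<rfloor> < m \<longleftrightarrow> x < real m"
  by (simp add: nat_less_iff floor_less_iff)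

lemma nat_floor_eq_iff: "0 \<le> x \<Longrightarrow> nat \<lfloor>x\<rfloor> = m \<longleftrightarrow> real m \<le> x \<and> x < real (Suc m)"
  by (auto simp: nat_eq_iff floor_eq_iff)

lemma linorder_insort_key_eq: "linorder.insort_key (\<le>) f x xs = insort_key (f :: 'b \<Rightarrow> 'a::linorder) x xs"
  by (induction xs) (simp_all add: linorder.insort_key.simps[OF linorder_class.linorder_axioms])

lemma linorder_sorted_key_list_of_set_eq:
  "linorder.sorted_key_list_of_set (\<le>) f A = sorted_key_list_of_set (f :: 'b \<Rightarrow> 'a::linorder) A"
  unfolding sorted_key_list_of_set_def linorder.sorted_key_list_of_set_def[OF linorder_class.linorder_axioms]
  by (simp add: linorder_insort_key_eq[abs_def])

lemma sorted_key_list_of_set_inj_on: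
  fixes f :: "'b \<Rightarrow> 'a::linorder"
  assumes "finite S" "inj_on f S"
  shows "set (sorted_key_list_of_set f S) = S" "sorted (map f (sorted_key_list_of_set f S))"
    "distinct (sorted_key_list_of_set f S)"
proof -
  interpret folding_insort_key "(\<le>)" "(<)" S f by unfold_locales (rule assms(2))
  show "set (sorted_key_list_of_set f S) = S" "sorted (map f (sorted_key_list_of_set f S))"
    using assms by (simp_all add: linorder_sorted_key_list_of_set_eq[symmetric])
  show "distinct (sorted_key_list_of_set f S)"
    using distinct_sorted_key_list_of_set[OF subset_refl]
    by (simp add: linorder_sorted_key_list_of_set_eq[symmetric] distinct_map)
qed

definition map_lip :: "real \<times> 'x \<times> (real \<Rightarrow> real) \<Rightarrow> real" where
  "map_lip q = lip_const (snd (snd q))"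

definition map_shift :: "real \<Rightarrow> real \<times> 'x \<times> (real \<Rightarrow> real) \<Rightarrow> real" where
  "map_shift z q = \<bar>snd (snd q) z - z\<bar>"

context poisson_iteration
begin

definition block_dev :: "real \<Rightarrow> 'w \<Rightarrow> nat \<Rightarrow> real" where
  "block_dev z w m = (\<Prod>q\<in>Pts w \<inter> window 0 m. map_lip q)
     * ((\<Prod>q\<in>Pts w \<inter> window m (Suc m). max 1 (map_lip q) + map_shift z q) - 1)"

lemma block_term_window_eq_block_dev:
  fixes m K :: nat
  assumes w: "w \<in> space M" and m: "m < K"
  shows "block_term fst map_lip (map_shift z) (Pts w \<inter> window 0 K) m = block_dev z w m"
proof -
  have before: "{q \<in> Pts w \<inter> window 0 K. nat \<lfloor>fst q\<rfloor> < m} = Pts w \<inter> window 0 m"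
    using m Pts_mem[OF w] by (auto simp: window_def nat_floor_less_iff)
  have "real (Suc m) \<le> K" using m by simp
  moreover have "nat \<lfloor>fst q\<rfloor> = m \<longleftrightarrow> real m \<le> fst q \<and> fst q < real (Suc m)" if "q \<in> Pts w" for q
    using Pts_mem[OF w that] by (intro nat_floor_eq_iff) simp
  ultimately have block: "{q \<in> Pts w \<inter> window 0 K. nat \<lfloor>fst q\<rfloor> = m} = Pts w \<inter> window m (Suc m)"
    unfolding window_def by auto
  show ?thesis unfolding block_term_def block_dev_def before block ..
qed

lemma block_dev_nonneg:
  assumes w: "w \<in> space M"
  shows "0 \<le> block_dev z w m"
proof -
  have "0 \<le> block_term fst map_lip (map_shift z) (Pts w \<inter> window 0 (Suc m)) m"
    using Pts_mem[OF w] by (intro block_term_nonneg) (auto simp: map_lip_def map_shift_def lip_const_nonneg)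
  then show ?thesis using block_term_window_eq_block_dev[OF w, of m "Suc m" z] by simp
qed

lemma abs_zeta_t_sub_le:
  assumes w: "w \<in> space M" and simple: "simple_config w"
  shows "\<bar>zeta_t (Pts w) A z s - z\<bar> \<le> (\<Sum>m<nat \<lfloor>max s 0\<rfloor> + 1. block_dev z w m)"
proof -
  define K where "K = nat \<lfloor>max s 0\<rfloor> + 1"
  define W where "W = {q \<in> Pts w. fst q \<le> s \<and> fst (snd q) \<in> A}"
  define P where "P = Pts w \<inter> window 0 K"
  have "s < K" unfolding K_def by linarith
  then have WP: "W \<subseteq> P"
    using Pts_mem[OF w] Pts_subset_space[OF w] unfolding W_def P_def window_def by auto
  have P: "finite P" "inj_on fst P"
    using simple unfolding simple_config_def P_def by simp_all
  have "finite W" "inj_on fst W" using finite_subset[OF WP P(1)] inj_on_subset[OF P(2) WP] .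
  define xs where "xs = sorted_key_list_of_set fst W"
  note xs = sorted_key_list_of_set_inj_on[OF \<open>finite W\<close> \<open>inj_on fst W\<close>, folded xs_def]
  have "zeta_t (Pts w) A z s = foldr (\<lambda>q g. snd (snd q) \<circ> g) xs id z"
    unfolding zeta_t_def points_upto_def xs_def W_def ..
  moreover have "\<forall>q\<in>set xs. snd (snd q) \<in> G_space"
    using xs(1) Pts_mem[OF w] unfolding W_def by auto
  ultimately have "\<bar>zeta_t (Pts w) A z s - z\<bar> \<le> chain_bound map_lip (map_shift z) xs"
    using abs_foldr_comp_sub_le_chain_bound[of xs "\<lambda>q. snd (snd q)" z]
    unfolding map_lip_def[abs_def] map_shift_def[abs_def] by (simp only:)
  also have "\<dots> \<le> (\<Sum>m<K. block_term fst map_lip (map_shift z) P m)"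
  proof (rule chain_bound_le_sum_block_term[OF P(1) _ _ xs(3,2)])
    show "\<forall>q\<in>P. nat \<lfloor>fst q\<rfloor> < K \<and> 0 \<le> map_lip q \<and> 0 \<le> map_shift z q"
      using Pts_mem[OF w] by (auto simp: P_def window_def nat_floor_less_iff map_lip_def map_shift_def lip_const_nonneg)
    show "\<forall>q\<in>P. \<forall>q'\<in>set xs. fst q < fst q' \<longrightarrow> q \<in> set xs"
      unfolding xs(1) by (auto simp: P_def W_def window_def)
  qed (use xs WP in auto)
  also have "\<dots> = (\<Sum>m<K. block_dev z w m)"
    unfolding P_def by (intro sum.cong refl block_term_window_eq_block_dev[OF w]) simp
  finally show ?thesis unfolding K_def .
qed

end

text \<open>Lim at_top f is the junk value THE l. False when f diverges; bounding that value too means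
  that the convergence of zeta_t is never needed.\<close>

lemma Lim_at_top_abs_le:
  fixes f :: "real \<Rightarrow> real"
  assumes bound: "\<And>s. ennreal \<bar>f s\<bar> \<le> B"
  shows "ennreal \<bar>Lim at_top f\<bar> \<le> ennreal \<bar>THE l::real. False\<bar> + B"
proof (cases "\<exists>l. (f \<longlongrightarrow> l) at_top")
  case True
  then obtain l where l: "(f \<longlongrightarrow> l) at_top" by blast
  have "ennreal \<bar>l\<bar> \<le> B"
    by (rule tendsto_upperbound[OF tendsto_ennrealI[OF tendsto_rabs[OF l]]]) (simp_all add: bound)
  then show ?thesis
    using tendsto_Lim[OF trivial_limit_at_top_linorder l] by (simp add: add_increasing)
next
  case False
  then have "Lim at_top f = (THE l::real. False)" by (simp add: Topological_Spaces.Lim_def)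
  then show ?thesis by (simp add: add_increasing2)
qed

lemma powr_add_le_two_powr:
  fixes a b p :: real
  assumes "0 \<le> a" "0 \<le> b" "0 < p"
  shows "(a + b) powr p \<le> 2 powr p * (a powr p + b powr p)"
proof -
  have "(a + b) powr p \<le> (2 * max a b) powr p"
    using assms by (intro powr_mono2) auto
  also have "\<dots> = 2 powr p * max a b powr p" using assms by (simp add: powr_mult)
  also have "max a b powr p \<le> a powr p + b powr p" by (simp add: max_def)
  finally show ?thesis by simp
qed

text \<open>Weighting y m by \<kappa>^-m turns a bound on the weighted series of the y m into a pointwise
  geometric bound, which controls the series of the (y m)^(1/p) uniformly in p > 0.\<close>

lemma suminf_le_of_weighted_suminf:
  fixes x y :: "nat \<Rightarrow> real"
  assumes p: "0 < p" and \<kappa>: "0 < \<kappa>" "\<kappa> < 1" and t: "0 \<le> t"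
    and x: "\<And>m. 0 \<le> x m" "\<And>m. x m powr p \<le> y m"
    and y: "(\<Sum>m. ennreal ((1 / \<kappa>) ^ m * y m)) = ennreal t"
  shows "(\<Sum>m. ennreal (x m)) \<le> ennreal (t powr (1 / p) / (1 - \<kappa> powr (1 / p)))"
proof -
  define \<theta> where "\<theta> = \<kappa> powr (1 / p)"
  have \<theta>: "0 < \<theta>" "\<theta> < 1"
    unfolding \<theta>_def using \<kappa> p powr_less_mono2[of "1 / p" \<kappa> 1] by auto
  have "x m \<le> t powr (1 / p) * \<theta> ^ m" for m
  proof -
    have "ennreal ((1 / \<kappa>) ^ m * y m) \<le> ennreal t"
      unfolding y[symmetric] using sum_le_suminf[of "\<lambda>m. ennreal ((1 / \<kappa>) ^ m * y m)" "{m}"] by simp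
    then have "\<kappa> ^ m * ((1 / \<kappa>) ^ m * y m) \<le> \<kappa> ^ m * t" using \<kappa> t by (intro mult_left_mono) auto
    then have "x m powr p \<le> \<kappa> ^ m * t" using x(2)[of m] \<kappa> by (simp add: field_simps)
    have "x m = (x m powr p) powr (1 / p)" using x(1)[of m] p by (simp add: powr_powr)
    also have "\<dots> \<le> (\<kappa> ^ m * t) powr (1 / p)"
      using \<open>x m powr p \<le> \<kappa> ^ m * t\<close> p by (intro powr_mono2) auto
    also have "\<dots> = t powr (1 / p) * \<theta> ^ m"
      unfolding \<theta>_def using \<kappa> t
      by (simp add: powr_mult powr_realpow[symmetric] powr_powr powr_power mult.commute)
    finally show ?thesis .
  qed
  then have "(\<Sum>m. ennreal (x m)) \<le> (\<Sum>m. ennreal (t powr (1 / p) * \<theta> ^ m))"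
    by (intro suminf_le ennreal_leI) auto
  also have "\<dots> = ennreal (t powr (1 / p) / (1 - \<theta>))"
    using sums_mult[OF geometric_sums[of \<theta>], of "t powr (1 / p)"] \<theta>
    by (subst suminf_ennreal2) (auto simp: sums_iff divide_inverse)
  finally show ?thesis unfolding \<theta>_def .
qed

lemma powr_le_weighted_suminf:
  fixes v D p \<kappa> :: real and x y :: "nat \<Rightarrow> real"
  assumes p: "0 < p" and \<kappa>: "0 < \<kappa>" "\<kappa> < 1" and D: "0 \<le> D" and v: "0 \<le> v"
    and x: "\<And>m. 0 \<le> x m" "\<And>m. x m powr p \<le> y m"
    and v_le: "ennreal v \<le> ennreal D + (\<Sum>m. ennreal (x m))"
  shows "ennreal (v powr p) \<le> ennreal (2 powr p * D powr p)
    + ennreal (2 powr p / (1 - \<kappa> powr (1 / p)) powr p) * (\<Sum>m. ennreal ((1 / \<kappa>) ^ m * y m))"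
proof -
  define \<theta> where "\<theta> = \<kappa> powr (1 / p)"
  have \<theta>: "\<theta> < 1" unfolding \<theta>_def using \<kappa> p powr_less_mono2[of "1 / p" \<kappa> 1] by auto
  define c where "c = 2 powr p / (1 - \<theta>) powr p"
  have c: "0 < c" unfolding c_def using \<theta> by simp
  define T where "T = (\<Sum>m. ennreal ((1 / \<kappa>) ^ m * y m))"
  show ?thesis
  proof (cases "T = \<top>")
    case True
    with c show ?thesis unfolding T_def[symmetric] \<theta>_def[symmetric] c_def[symmetric]
      by (simp add: ennreal_mult_top)
  next
    case False
    then obtain t where t: "0 \<le> t" "T = ennreal t" by (cases T) auto
    have "(\<Sum>m. ennreal (x m)) \<le> ennreal (t powr (1 / p) / (1 - \<theta>))"
      using t(2) unfolding T_def \<theta>_def by (rule suminf_le_of_weighted_suminf[OF p \<kappa> t(1) x])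
    with v_le have "ennreal v \<le> ennreal D + ennreal (t powr (1 / p) / (1 - \<theta>))"
      by (meson add_left_mono order_trans)
    also have "\<dots> = ennreal (D + t powr (1 / p) / (1 - \<theta>))"
      using D \<theta> by simp
    finally have "ennreal v \<le> ennreal (D + t powr (1 / p) / (1 - \<theta>))" .
    then have "v \<le> D + t powr (1 / p) / (1 - \<theta>)"
      using D \<theta> by (subst (asm) ennreal_le_iff) auto
    then have "v powr p \<le> (D + t powr (1 / p) / (1 - \<theta>)) powr p"
      using v p by (intro powr_mono2) auto
    also have "\<dots> \<le> 2 powr p * (D powr p + (t powr (1 / p) / (1 - \<theta>)) powr p)"
      using D t \<theta> p by (intro powr_add_le_two_powr) auto
    also have "(t powr (1 / p) / (1 - \<theta>)) powr p = t / (1 - \<theta>) powr p"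
      using t \<theta> p by (simp add: powr_divide powr_powr)
    finally have "v powr p \<le> 2 powr p * D powr p + c * t" unfolding c_def by (simp add: algebra_simps)
    then have "ennreal (v powr p) \<le> ennreal (2 powr p * D powr p + c * t)" by (rule ennreal_leI)
    also have "\<dots> = ennreal (2 powr p * D powr p) + ennreal c * ennreal t"
      using c t by (simp add: ennreal_mult)
    finally show ?thesis unfolding c_def \<theta>_def t(2)[symmetric] T_def .
  qed
qed

lemma nn_integral_weighted_suminf_finite:
  fixes Y :: "nat \<Rightarrow> 'a \<Rightarrow> real"
  assumes Y: "\<And>m. Y m \<in> borel_measurable M" "\<And>m. (\<integral>\<^sup>+w. Y m w \<partial>M) \<le> ennreal (C * \<rho> ^ m)"
    and C: "0 \<le> C" and \<rho>: "0 \<le> \<rho>" "\<rho> < \<kappa>"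
  shows "(\<integral>\<^sup>+w. (\<Sum>m. ennreal ((1 / \<kappa>) ^ m * Y m w)) \<partial>M) < \<infinity>"
proof -
  have \<kappa>: "0 < \<kappa>" using \<rho> by simp
  have [measurable]: "Y m \<in> borel_measurable M" for m by (rule Y(1))
  have "(\<integral>\<^sup>+w. (\<Sum>m. ennreal ((1 / \<kappa>) ^ m * Y m w)) \<partial>M)
      = (\<Sum>m. \<integral>\<^sup>+w. ennreal ((1 / \<kappa>) ^ m * Y m w) \<partial>M)"
    by (rule nn_integral_suminf) measurable
  also have "\<dots> \<le> (\<Sum>m. ennreal (C * (\<rho> / \<kappa>) ^ m))"
  proof (rule suminf_le)
    fix m
    have "(\<integral>\<^sup>+w. ennreal ((1 / \<kappa>) ^ m * Y m w) \<partial>M) = ennreal ((1 / \<kappa>) ^ m) * (\<integral>\<^sup>+w. Y m w \<partial>M)"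
      using \<kappa> by (simp add: ennreal_mult' nn_integral_cmult)
    also have "\<dots> \<le> ennreal ((1 / \<kappa>) ^ m) * ennreal (C * \<rho> ^ m)"
      using Y(2) by (rule mult_left_mono) simp
    also have "\<dots> = ennreal (C * (\<rho> / \<kappa>) ^ m)"
      using \<kappa> C \<rho> by (simp add: ennreal_mult[symmetric] field_simps)
    finally show "(\<integral>\<^sup>+w. ennreal ((1 / \<kappa>) ^ m * Y m w) \<partial>M) \<le> ennreal (C * (\<rho> / \<kappa>) ^ m)" .
  qed auto
  also have "\<dots> = ennreal (\<Sum>m. C * (\<rho> / \<kappa>) ^ m)"
  proof (rule suminf_ennreal2)
    show "0 \<le> C * (\<rho> / \<kappa>) ^ m" for m using \<kappa> \<rho> C by simp
    show "summable (\<lambda>m. C * (\<rho> / \<kappa>) ^ m)"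
      using \<kappa> \<rho> by (intro summable_mult summable_geometric) simp
  qed
  also have "\<dots> < \<infinity>" by simp
  finally show ?thesis .
qed

lemma (in prob_space) nn_integral_powr_max_one_add_finite:
  assumes p: "0 < p" and [measurable]: "L \<in> borel_measurable M" "b \<in> borel_measurable M"
    and L: "\<And>x. x \<in> space M \<Longrightarrow> 0 \<le> L x" "(\<integral>\<^sup>+x. L x powr p \<partial>M) < \<infinity>"
    and b: "(\<integral>\<^sup>+x. \<bar>b x\<bar> powr p \<partial>M) < \<infinity>"
  shows "(\<integral>\<^sup>+x. (max 1 (L x) + \<bar>b x\<bar>) powr p \<partial>M) < \<infinity>"
proof -
  have "ennreal ((max 1 (L x) + \<bar>b x\<bar>) powr p)
      \<le> ennreal (2 powr p) * (1 + ennreal (L x powr p) + ennreal (\<bar>b x\<bar> powr p))" if "x \<in> space M" for x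
  proof -
    have "(max 1 (L x) + \<bar>b x\<bar>) powr p \<le> 2 powr p * (max 1 (L x) powr p + \<bar>b x\<bar> powr p)"
      using p by (intro powr_add_le_two_powr) auto
    also have "max 1 (L x) powr p \<le> 1 + L x powr p" by (simp add: max_def)
    finally have "ennreal ((max 1 (L x) + \<bar>b x\<bar>) powr p)
        \<le> ennreal (2 powr p * (1 + L x powr p + \<bar>b x\<bar> powr p))"
      by (intro ennreal_leI) (simp add: algebra_simps)
    also have "\<dots> = ennreal (2 powr p) * (1 + ennreal (L x powr p) + ennreal (\<bar>b x\<bar> powr p))"
      by (simp add: ennreal_mult)
    finally show ?thesis .
  qed
  then have "(\<integral>\<^sup>+x. (max 1 (L x) + \<bar>b x\<bar>) powr p \<partial>M)
      \<le> (\<integral>\<^sup>+x. ennreal (2 powr p) * (1 + ennreal (L x powr p) + ennreal (\<bar>b x\<bar> powr p)) \<partial>M)"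
    by (intro nn_integral_mono)
  also have "\<dots> = ennreal (2 powr p) * (1 + (\<integral>\<^sup>+x. L x powr p \<partial>M) + (\<integral>\<^sup>+x. \<bar>b x\<bar> powr p \<partial>M))"
    by (simp add: nn_integral_cmult nn_integral_add emeasure_space_1)
  also have "\<dots> < \<infinity>" using L(2) b by (simp add: ennreal_mult_less_top)
  finally show ?thesis .
qed

definition block_weight :: "real \<Rightarrow> real \<Rightarrow> nat \<Rightarrow> real \<times> 'x \<times> (real \<Rightarrow> real) \<Rightarrow> real" where
  "block_weight z p m q = (if fst q < m then map_lip q else max 1 (map_lip q) + map_shift z q) powr p"

context poisson_iteration
begin

lemma abs_zeta_le:
  assumes w: "w \<in> space M" and simple: "simple_config w"
  shows "ennreal \<bar>zeta (Pts w) A z\<bar>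
    \<le> ennreal \<bar>THE l::real. False\<bar> + (ennreal \<bar>z\<bar> + (\<Sum>m. ennreal (block_dev z w m)))"
  unfolding zeta_def
proof (rule Lim_at_top_abs_le)
  fix s :: real
  define K where "K = nat \<lfloor>max s 0\<rfloor> + 1"
  have "\<bar>zeta_t (Pts w) A z s\<bar> \<le> \<bar>z\<bar> + (\<Sum>m<K. block_dev z w m)"
    using abs_zeta_t_sub_le[OF w simple, of z s] unfolding K_def by linarith
  then have "ennreal \<bar>zeta_t (Pts w) A z s\<bar> \<le> ennreal (\<bar>z\<bar> + (\<Sum>m<K. block_dev z w m))"
    by (rule ennreal_leI)
  also have "\<dots> = ennreal \<bar>z\<bar> + (\<Sum>m<K. ennreal (block_dev z w m))"
    using block_dev_nonneg[OF w] by (simp add: sum_nonneg)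
  also have "\<dots> \<le> ennreal \<bar>z\<bar> + (\<Sum>m. ennreal (block_dev z w m))"
    by (intro add_left_mono sum_le_suminf) auto
  finally show "ennreal \<bar>zeta_t (Pts w) A z s\<bar> \<le> \<dots>" .
qed

lemma block_dev_powr_le_point_prod:
  assumes w: "w \<in> space M" and simple: "simple_config w" and p: "0 < p"
  shows "block_dev z w m powr p \<le> point_prod (block_weight z p m) (window 0 (Suc m)) w"
proof -
  define P1 where "P1 = Pts w \<inter> window 0 m"
  define P2 where "P2 = Pts w \<inter> window m (Suc m)"
  have fin: "finite (Pts w \<inter> window 0 (Suc m))" using simple unfolding simple_config_def by blast
  have U: "Pts w \<inter> window 0 (Suc m) = P1 \<union> P2" unfolding P1_def P2_def window_def by auto
  have P: "finite P1" "finite P2" "P1 \<inter> P2 = {}" using fin U by (auto simp: P1_def P2_def window_def)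
  define L where "L = (\<Prod>q\<in>P1. map_lip q)"
  define Z where "Z = (\<Prod>q\<in>P2. max 1 (map_lip q) + map_shift z q)"
  have L: "0 \<le> L" unfolding L_def P1_def using Pts_mem[OF w]
    by (intro prod_nonneg) (auto simp: map_lip_def lip_const_nonneg)
  have Z: "1 \<le> Z" unfolding Z_def by (intro prod_ge_1) (auto simp: map_shift_def max_def)
  have "point_prod (block_weight z p m) (window 0 (Suc m)) w
      = (\<Prod>q\<in>P1. block_weight z p m q) * (\<Prod>q\<in>P2. block_weight z p m q)"
    unfolding point_prod_def using fin U prod.union_disjoint[OF P] by simp
  also have "\<dots> = (\<Prod>q\<in>P1. map_lip q powr p) * (\<Prod>q\<in>P2. (max 1 (map_lip q) + map_shift z q) powr p)"
    by (intro arg_cong2[where f = "(*)"] prod.cong refl) (auto simp: block_weight_def P1_def P2_def window_def)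
  also have "\<dots> = (L * Z) powr p"
    unfolding L_def Z_def using L Z by (simp add: prod_powr_distrib powr_mult)
  finally have "point_prod (block_weight z p m) (window 0 (Suc m)) w = (L * Z) powr p" .
  moreover have "block_dev z w m = L * (Z - 1)" unfolding block_dev_def L_def Z_def P1_def P2_def ..
  then have "block_dev z w m \<le> L * Z" using L by (simp add: mult_left_mono)
  ultimately show ?thesis using block_dev_nonneg[OF w] p by (simp add: powr_mono2)
qed

lemma borel_measurable_block_weight[measurable]: "block_weight z p m \<in> borel_measurable Lam"
  unfolding block_weight_def[abs_def] map_lip_def map_shift_def by measurable

lemma nn_integral_block_weight:
  "(\<integral>\<^sup>+q. ennreal (block_weight z p m q) * indicator (window 0 (Suc m)) q \<partial>Lam)
    = ennreal m * emeasure \<mu> A * (\<integral>\<^sup>+f. lip_const f powr p \<partial>\<nu>)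
      + emeasure \<mu> A * (\<integral>\<^sup>+f. (max 1 (lip_const f) + \<bar>f z - z\<bar>) powr p \<partial>\<nu>)"
proof -
  define \<phi>1 where "\<phi>1 f = ennreal (lip_const f powr p)" for f :: "real \<Rightarrow> real"
  define \<phi>2 where "\<phi>2 f = ennreal ((max 1 (lip_const f) + \<bar>f z - z\<bar>) powr p)" for f :: "real \<Rightarrow> real"
  have [measurable]: "\<phi>1 \<in> borel_measurable \<nu>" "\<phi>2 \<in> borel_measurable \<nu>"
    unfolding \<phi>1_def \<phi>2_def by measurable
  have split: "ennreal (block_weight z p m q) * indicator (window 0 (Suc m)) q
      = \<phi>1 (snd (snd q)) * indicator (window 0 m) q + \<phi>2 (snd (snd q)) * indicator (window m (Suc m)) q" for q
    by (cases "q \<in> window 0 m"; cases "q \<in> window m (Suc m)")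
      (auto simp: window_def block_weight_def map_lip_def map_shift_def \<phi>1_def \<phi>2_def)
  have "(\<integral>\<^sup>+q. ennreal (block_weight z p m q) * indicator (window 0 (Suc m)) q \<partial>Lam)
      = (\<integral>\<^sup>+q. \<phi>1 (snd (snd q)) * indicator (window 0 m) q \<partial>Lam)
        + (\<integral>\<^sup>+q. \<phi>2 (snd (snd q)) * indicator (window m (Suc m)) q \<partial>Lam)"
    unfolding split by (rule nn_integral_add) measurable
  also have "\<dots> = ennreal m * emeasure \<mu> A * (\<integral>\<^sup>+f. \<phi>1 f \<partial>\<nu>) + ennreal 1 * emeasure \<mu> A * (\<integral>\<^sup>+f. \<phi>2 f \<partial>\<nu>)"
    using nn_integral_window[of \<phi>1 0 m] nn_integral_window[of \<phi>2 m "Suc m"] by simp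
  finally show ?thesis unfolding \<phi>1_def \<phi>2_def by simp
qed

lemma nn_integral_point_prod_block_weight_le:
  assumes p: "0 < p"
    and c: "(\<integral>\<^sup>+f. lip_const f powr p \<partial>\<nu>) = ennreal c" "0 \<le> c"
    and k: "(\<integral>\<^sup>+f. (max 1 (lip_const f) + \<bar>f z - z\<bar>) powr p \<partial>\<nu>) = ennreal k" "0 \<le> k"
  shows "point_prod (block_weight z p m) (window 0 (Suc m)) \<in> borel_measurable M \<and>
    (\<integral>\<^sup>+w. point_prod (block_weight z p m) (window 0 (Suc m)) w \<partial>M)
      \<le> exp (rate * (k - 1)) * exp (- (rate * (1 - c))) ^ m"
proof -
  have "(\<integral>\<^sup>+q. ennreal (block_weight z p m q) * indicator (window 0 (Suc m)) q \<partial>Lam)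
      \<le> ennreal (m * rate * c + rate * k)"
    unfolding nn_integral_block_weight c k emeasure_A using rate_nonneg c k
    by (simp add: ennreal_mult[symmetric] ennreal_plus[symmetric] del: ennreal_plus)
  then have "point_prod (block_weight z p m) (window 0 (Suc m)) \<in> borel_measurable M \<and>
    (\<integral>\<^sup>+w. point_prod (block_weight z p m) (window 0 (Suc m)) w \<partial>M)
      \<le> exp (m * rate * c + rate * k - measure Lam (window 0 (Suc m)))"
    using rate_nonneg c k
    by (intro nn_integral_point_prod_le window_sets window_finite) (auto simp: block_weight_def)
  moreover have "m * rate * c + rate * k - measure Lam (window 0 (Suc m))
      = rate * (k - 1) + m * (- (rate * (1 - c)))"
    by (subst measure_window) (auto simp: algebra_simps)
  ultimately show ?thesis by (simp only: exp_add exp_of_nat_mult)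
qed

lemma AE_abs_zeta_powr_le:
  assumes p: "0 < p" and \<kappa>: "0 < \<kappa>" "\<kappa> < 1"
  shows "AE w in M. ennreal (\<bar>zeta (Pts w) A z\<bar> powr p)
    \<le> ennreal (2 powr p * (\<bar>THE l::real. False\<bar> + \<bar>z\<bar>) powr p)
      + ennreal (2 powr p / (1 - \<kappa> powr (1 / p)) powr p)
        * (\<Sum>m. ennreal ((1 / \<kappa>) ^ m * point_prod (block_weight z p m) (window 0 (Suc m)) w))"
    (is "AE w in M. ?bound w")
  using AE_simple_config
proof (rule AE_mp, intro AE_I2 impI)
  fix w assume w: "w \<in> space M" and simple: "simple_config w"
  show "?bound w"
  proof (rule powr_le_weighted_suminf[OF p \<kappa>])
    show "ennreal \<bar>zeta (Pts w) A z\<bar>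
        \<le> ennreal (\<bar>THE l::real. False\<bar> + \<bar>z\<bar>) + (\<Sum>m. ennreal (block_dev z w m))"
      using abs_zeta_le[OF w simple] by (simp add: add.assoc)
    show "block_dev z w m powr p \<le> point_prod (block_weight z p m) (window 0 (Suc m)) w" for m
      by (rule block_dev_powr_le_point_prod[OF w simple p])
  qed (simp_all add: block_dev_nonneg[OF w])
qed

lemma nn_integral_abs_zeta_powr_finite:
  assumes p: "0 < p" and A_pos: "0 < emeasure \<mu> A"
    and L: "(\<integral>\<^sup>+f. lip_const f powr p \<partial>\<nu>) < 1" and b: "(\<integral>\<^sup>+f. \<bar>f z - z\<bar> powr p \<partial>\<nu>) < \<infinity>"
  shows "(\<integral>\<^sup>+w. \<bar>zeta (Pts w) A z\<bar> powr p \<partial>M) < \<infinity>"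
proof -
  interpret \<nu>: prob_space \<nu> by (rule \<nu>_prob)
  obtain c where c: "(\<integral>\<^sup>+f. lip_const f powr p \<partial>\<nu>) = ennreal c" "0 \<le> c" "c < 1"
    using L by (cases "\<integral>\<^sup>+f. lip_const f powr p \<partial>\<nu>") (auto simp: ennreal_less_iff simp flip: ennreal_1)
  have "(\<integral>\<^sup>+f. (max 1 (lip_const f) + \<bar>f z - z\<bar>) powr p \<partial>\<nu>) < \<infinity>"
    using L b \<nu>_space lip_const_nonneg
    by (intro \<nu>.nn_integral_powr_max_one_add_finite[OF p]) (auto simp: less_top[symmetric])
  then obtain k where k: "(\<integral>\<^sup>+f. (max 1 (lip_const f) + \<bar>f z - z\<bar>) powr p \<partial>\<nu>) = ennreal k" "0 \<le> k"
    by (cases "\<integral>\<^sup>+f. (max 1 (lip_const f) + \<bar>f z - z\<bar>) powr p \<partial>\<nu>") auto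
  define \<rho> where "\<rho> = exp (- (rate * (1 - c)))"
  have "0 < rate" using A_pos emeasure_A by simp
  then have \<rho>: "0 < \<rho>" "\<rho> < 1" unfolding \<rho>_def using c by auto
  define \<kappa> where "\<kappa> = (1 + \<rho>) / 2"
  have \<kappa>: "0 < \<kappa>" "\<kappa> < 1" "\<rho> < \<kappa>" unfolding \<kappa>_def using \<rho> by auto
  define Y where "Y m = point_prod (block_weight z p m) (window 0 (Suc m))" for m
  define T where "T w = (\<Sum>m. ennreal ((1 / \<kappa>) ^ m * Y m w))" for w
  have Y: "Y m \<in> borel_measurable M" "(\<integral>\<^sup>+w. Y m w \<partial>M) \<le> ennreal (exp (rate * (k - 1)) * \<rho> ^ m)" for m
    using nn_integral_point_prod_block_weight_le[OF p c(1,2) k, of m] unfolding Y_def \<rho>_def by auto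
  then have [measurable]: "T \<in> borel_measurable M" unfolding T_def by measurable
  have "(\<integral>\<^sup>+w. \<bar>zeta (Pts w) A z\<bar> powr p \<partial>M) \<le> (\<integral>\<^sup>+w. ennreal (2 powr p * (\<bar>THE l::real. False\<bar> + \<bar>z\<bar>) powr p)
      + ennreal (2 powr p / (1 - \<kappa> powr (1 / p)) powr p) * T w \<partial>M)"
    unfolding T_def Y_def by (rule nn_integral_mono_AE[OF AE_abs_zeta_powr_le[OF p \<kappa>(1,2)]])
  also have "\<dots> = ennreal (2 powr p * (\<bar>THE l::real. False\<bar> + \<bar>z\<bar>) powr p)
      + ennreal (2 powr p / (1 - \<kappa> powr (1 / p)) powr p) * (\<integral>\<^sup>+w. T w \<partial>M)"
    by (simp add: nn_integral_add nn_integral_cmult emeasure_space_1)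
  also have "\<dots> < \<infinity>"
    using nn_integral_weighted_suminf_finite[OF Y _ _ \<kappa>(3)] \<rho> k(2) unfolding T_def[symmetric]
    by (simp add: ennreal_mult_less_top)
  finally show ?thesis .
qed

end

theorem proposition3p3:
  fixes M :: "'w measure"
    and \<mu> :: "'x::polish_space measure"
    and \<nu> :: "(real \<Rightarrow> real) measure"
    and Pts :: "'w \<Rightarrow> (real \<times> 'x \<times> (real \<Rightarrow> real)) set"
    and z0 p :: real
    and A :: "'x set"
  assumes \<nu>_prob: "prob_space \<nu>"
    and \<nu>_space: "space \<nu> = G_space"
    and \<nu>_sets: "sets \<nu> = sets G_borel"
    and EL: "(\<integral>\<^sup>+ f. ennreal (lip_const f) \<partial>\<nu>) < \<infinity>"
    and Elog: "(\<integral>\<^sup>+ f. ennreal (max 0 (ln (lip_const f))) \<partial>\<nu>)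
               < (\<integral>\<^sup>+ f. (if lip_const f = 0 then \<infinity> else ennreal (max 0 (- ln (lip_const f)))) \<partial>\<nu>)"
    and Ez0: "(\<integral>\<^sup>+ f. ennreal \<bar>f z0 - z0\<bar> \<partial>\<nu>) < \<infinity>"
    and \<mu>_sf: "sigma_finite_measure \<mu>"
    and \<mu>_sets: "sets \<mu> = sets borel"
    and PPP: "poisson_process M (restrict_space lborel {0..} \<Otimes>\<^sub>M (\<mu> \<Otimes>\<^sub>M \<nu>)) Pts"
    and p_pos: "p > 0"
    and ELp: "(\<integral>\<^sup>+ f. ennreal (lip_const f powr p) \<partial>\<nu>) < 1"
    and Ez0p: "(\<integral>\<^sup>+ f. ennreal (\<bar>f z0 - z0\<bar> powr p) \<partial>\<nu>) < \<infinity>"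
    and A_sets: "A \<in> sets borel"
    and A_pos: "0 < emeasure \<mu> A"
    and A_fin: "emeasure \<mu> A < \<infinity>"
  shows "(\<integral>\<^sup>+ w. ennreal (\<bar>zeta (Pts w) A z0\<bar> powr p) \<partial>M) < \<infinity>"
proof -
  \<comment> \<open>EL, Elog and Ez0 only serve the existence of the limit zeta, which the bound does not need.\<close>
  interpret poisson_iteration M \<mu> \<nu> Pts A
    using PPP \<nu>_prob \<nu>_space \<nu>_sets \<mu>_sf A_sets A_fin
    by (simp add: poisson_iteration_def poisson_iteration_axioms_def poisson_proc_def \<mu>_sets)
  show ?thesis by (rule nn_integral_abs_zeta_powr_finite[OF p_pos A_pos ELp Ez0p])
qed

end
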